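(* Let $d\ge 1$, $T\in\mathbb{Q}^d_{\ge 0}$, and let $\mathcal{V}_L\subseteq\mathbb{Q}^d_{\ge 0}$ be a finite set that is 3-incompatible with respect to $T$. Let $m$ be an integer with $|\mathcal{V}_L|/2\le m\le|\mathcal{V}_L|$ and set $C_2=|\mathcal{V}_L|-m$. Let $0\le p\le m$ and let $s(1),\dots,s(p)\in\mathbb{Q}^d_{\ge 0}$ with $s(i)\le T$ componentwise. Consider $m$ containers: for $i\in\{1,\dots,p\}$ a container of capacity $s(i)$, and $m-p$ further containers of capacity $T$. Let $\mathcal{C}=\{1,\dots,p\}$ if $p=m$, and $\mathcal{C}=\{1,\dots,p\}\cup\{\top\}$ with $s(\top)=T$ if $p<m$. Build the graph $G$ with vertex set $\mathcal{V}_L\cup\mathcal{V}_L'\cup\mathcal{B}$, where $\mathcal{V}_L'=\{v'\mid v\in\mathcal{V}_L\}$ is a set of new copies and $\mathcal{B}$ is a set of $2C_2$ new vertices; for each $c\in\mathcal{C}$ let $E_c=\{\{u,v\}\mid u\neq v\in\mathcal{V}_L,\ u+v\le s(c)\}\cup\{\{v,v'\}\mid v\in\mathcal{V}_L,\ v\le s(c)\}$ (inequalities componentwise), let $E_\bot=\{\{v',b\}\mid v'\in\mathcal{V}_L',b\in\mathcal{B}\}$, and $E(G)=E_\bot\cup\bigcup_{c\in\mathcal{C}}E_c$. Let the color set be $\mathcal{C}'=\mathcal{C}\cup\{\bot\}$ if $C_2>0$ and $\mathcal{C}'=\mathcal{C}$ if $C_2=0$, let $\lambda(e)=\{c\in\mathcal{C}'\mid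 e\in E_c\}$, $\gamma(e,c)=1$ for all $e$ and $c\in\lambda(e)$, and $\ell=|\mathcal{V}_L|+C_2$. Then there is an assignment of all vectors of $\mathcal{V}_L$ to the $m$ containers such that every container receives at least one vector and the sum of the vectors in each container is componentwise at most its capacity if and only if $(G,\mathcal{C}',\lambda,\gamma,\ell)$ is a "yes"-instance of Perfect Over-The-Rainbow Matching.
   Context: A set $\mathcal{V}'\subseteq\mathbb{Q}^d_{\ge 0}$ is 3-incompatible with respect to $T$ if for any three distinct $u,v,w\in\mathcal{V}'$ there is a coordinate $j$ with $u^j+v^j+w^j>T^j$. Perfect Over-The-Rainbow Matching: given a graph $G$, a color set $\mathcal{C}'$, $\lambda:E(G)\to 2^{\mathcal{C}'}\setminus\{\emptyset\}$, weights $\gamma(e,c)\ge 0$ for $c\in\lambda(e)$, and a number $\ell$, the instance is a "yes"-instance iff there exist a perfect matching $M$ of $G$ and a surjective map $\xi:M\to\mathcal{C}'$ with $\xi(e)\in\lambda(e)$ for all $e\in M$ and $\sum_{e\in M}\gamma(e,\xi(e))\le\ell$. *)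

theory Defs
  imports Main "HOL.Rat"
begin

section \<open>Vectors in Q^d as lists of length d\<close>

definition vec_nonneg :: "nat \<Rightarrow> rat list \<Rightarrow> bool" where
  "vec_nonneg d v \<longleftrightarrow> length v = d \<and> (\<forall>j<d. 0 \<le> v ! j)"

definition vle :: "nat \<Rightarrow> rat list \<Rightarrow> rat list \<Rightarrow> bool" where
  "vle d u v \<longleftrightarrow> (\<forall>j<d. u ! j \<le> v ! j)"

definition vadd :: "nat \<Rightarrow> rat list \<Rightarrow> rat list \<Rightarrow> rat list" where
  "vadd d u v = map (\<lambda>j. u ! j + v ! j) [0..<d]"

definition vsum :: "nat \<Rightarrow> rat list set \<Rightarrow> rat list" where
  "vsum d S = map (\<lambda>j. \<Sum>v\<in>S. v ! j) [0..<d]"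

definition three_incompatible :: "nat \<Rightarrow> rat list set \<Rightarrow> rat list \<Rightarrow> bool" where
  "three_incompatible d V T \<longleftrightarrow>
     (\<forall>u\<in>V. \<forall>v\<in>V. \<forall>w\<in>V. u \<noteq> v \<and> u \<noteq> w \<and> v \<noteq> w \<longrightarrow>
        (\<exists>j<d. u ! j + v ! j + w ! j > T ! j))"

text \<open>A graph is given by its vertex set and its set of edges (2-element vertex sets).\<close>
definition perfect_matching :: "'v set \<Rightarrow> 'v set set \<Rightarrow> 'v set set \<Rightarrow> bool" where
  "perfect_matching Vs E M \<longleftrightarrow> M \<subseteq> E \<and>
     (\<forall>e\<in>M. \<forall>e'\<in>M. e \<noteq> e' \<longrightarrow> e \<inter> e' = {}) \<and> \<Union>M = Vs"

definition otr_yes :: "'v set \<Rightarrow> 'v set set \<Rightarrow> 'c set \<Rightarrow> ('v set \<Rightarrow> 'c set)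
      \<Rightarrow> ('v set \<Rightarrow> 'c \<Rightarrow> rat) \<Rightarrow> rat \<Rightarrow> bool" where
  "otr_yes Vs E Cs lam gam ell \<longleftrightarrow>
     (\<exists>M \<xi>. perfect_matching Vs E M \<and> (\<forall>e\<in>M. \<xi> e \<in> lam e) \<and> \<xi> ` M = Cs \<and>
        (\<Sum>e\<in>M. gam e (\<xi> e)) \<le> ell)"

datatype vert = Orig "rat list" | Copy "rat list" | Bv nat
datatype color = Col nat | Top | Bot

definition cap :: "rat list \<Rightarrow> (nat \<Rightarrow> rat list) \<Rightarrow> color \<Rightarrow> rat list" where
  "cap T s c = (case c of Col i \<Rightarrow> s i | _ \<Rightarrow> T)"

definition colorsC :: "nat \<Rightarrow> nat \<Rightarrow> color set" where
  "colorsC m p = Col ` {1..p} \<union> (if p < m then {Top} else {})"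

definition Bset :: "nat \<Rightarrow> vert set" where
  "Bset C2 = Bv ` {..<2 * C2}"

definition vertsG :: "rat list set \<Rightarrow> nat \<Rightarrow> vert set" where
  "vertsG V C2 = Orig ` V \<union> Copy ` V \<union> Bset C2"

definition E_col :: "nat \<Rightarrow> rat list set \<Rightarrow> rat list \<Rightarrow> (nat \<Rightarrow> rat list) \<Rightarrow> color \<Rightarrow> vert set set" where
  "E_col d V T s c =
     {{Orig u, Orig v} | u v. u \<in> V \<and> v \<in> V \<and> u \<noteq> v \<and> vle d (vadd d u v) (cap T s c)}
     \<union> {{Orig v, Copy v} | v. v \<in> V \<and> vle d v (cap T s c)}"

definition E_bot :: "rat list set \<Rightarrow> nat \<Rightarrow> vert set set" where
  "E_bot V C2 = {{Copy v, b} | v b. v \<in> V \<and> b \<in> Bset C2}"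

definition Ec :: "nat \<Rightarrow> rat list set \<Rightarrow> rat list \<Rightarrow> (nat \<Rightarrow> rat list) \<Rightarrow> nat \<Rightarrow> color \<Rightarrow> vert set set" where
  "Ec d V T s C2 c = (if c = Bot then E_bot V C2 else E_col d V T s c)"

definition edgesG :: "nat \<Rightarrow> rat list set \<Rightarrow> rat list \<Rightarrow> (nat \<Rightarrow> rat list) \<Rightarrow> nat \<Rightarrow> nat \<Rightarrow> nat \<Rightarrow> vert set set" where
  "edgesG d V T s m p C2 = E_bot V C2 \<union> (\<Union>c\<in>colorsC m p. E_col d V T s c)"

definition colorsC' :: "nat \<Rightarrow> nat \<Rightarrow> nat \<Rightarrow> color set" where
  "colorsC' m p C2 = colorsC m p \<union> (if C2 > 0 then {Bot} else {})"

definition lamG :: "nat \<Rightarrow> rat list set \<Rightarrow> rat list \<Rightarrow> (nat \<Rightarrow> rat list) \<Rightarrow> nat \<Rightarrow> nat \<Rightarrow> nat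
     \<Rightarrow> vert set \<Rightarrow> color set" where
  "lamG d V T s m p C2 e = {c \<in> colorsC' m p C2. e \<in> Ec d V T s C2 c}"

definition container_cap :: "rat list \<Rightarrow> (nat \<Rightarrow> rat list) \<Rightarrow> nat \<Rightarrow> nat \<Rightarrow> rat list" where
  "container_cap T s p k = (if k \<le> p then s k else T)"

definition feasible_assignment :: "nat \<Rightarrow> rat list set \<Rightarrow> rat list \<Rightarrow> (nat \<Rightarrow> rat list) \<Rightarrow> nat \<Rightarrow> nat \<Rightarrow> bool" where
  "feasible_assignment d V T s m p \<longleftrightarrow>
     (\<exists>f. (\<forall>v\<in>V. f v \<in> {1..m}) \<and> f ` V = {1..m} \<and>
          (\<forall>k\<in>{1..m}. vle d (vsum d {v\<in>V. f v = k}) (container_cap T s p k)))"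

end

theory Submission
  imports Defs
begin

(*
  By 3-incompatibility a feasible assignment puts one or two vectors into every container,
  so exactly C2 = |V| - m of the m containers hold two. A container with content {v} becomes
  the edge {v, v'} and one with content {u, w} the edge {u, w}, coloured by the container
  (i for i <= p, top otherwise); the 2 C2 copies of vectors sharing a container are matched
  to B by bot-edges.
  Conversely, every perfect matching of G has (2|V| + 2 C2) / 2 = |V| + C2 edges, so the cost
  bound is automatic. Exactly 2 C2 of them cover B, and each of the other m edges carries one
  or two vectors of V that fit the capacity of its colour. Surjectivity of the colouring lets
  us number these m edges so that the edge of colour i becomes container i.
*)

lemma vsum_nth: "j < d \<Longrightarrow> vsum d S ! j = (\<Sum>v\<in>S. v ! j)"
  by (simp add: vsum_def)

lemma vadd_nth: "j < d \<Longrightarrow> vadd d u v ! j = u ! j + v ! j"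
  by (simp add: vadd_def)

lemma vle_refl [simp]: "vle d a a"
  by (simp add: vle_def)

lemma vle_trans: "vle d a b \<Longrightarrow> vle d b c \<Longrightarrow> vle d a c"
  unfolding vle_def by (meson order_trans)

lemma vle_vsum_singleton_iff [simp]: "vle d (vsum d {v}) c \<longleftrightarrow> vle d v c"
  by (simp add: vle_def vsum_nth)

lemma vle_vsum_doubleton_iff: "u \<noteq> v \<Longrightarrow> vle d (vsum d {u, v}) c \<longleftrightarrow> vle d (vadd d u v) c"
  by (simp add: vle_def vsum_nth vadd_nth)

lemma three_incompatible_card_le_2:
  assumes "three_incompatible d V T" and "\<forall>v\<in>V. vec_nonneg d v"
    and "G \<subseteq> V" and "finite G" and "vle d (vsum d G) T"
  shows "card G \<le> 2"
proof (rule ccontr)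
  assume "\<not> card G \<le> 2"
  then have "3 \<le> card G"
    by simp
  then obtain S where S: "S \<subseteq> G" "card S = 3"
    by (rule obtain_subset_with_card_n)
  then obtain x y z where xyz: "S = {x, y, z}" "x \<noteq> y" "y \<noteq> z" "x \<noteq> z"
    by (auto simp: card_3_iff)
  moreover have "x \<in> V" "y \<in> V" "z \<in> V"
    using xyz S assms(3) by auto
  ultimately obtain j where j: "j < d" "T ! j < x ! j + y ! j + z ! j"
    using assms(1) unfolding three_incompatible_def by blast
  have "x ! j + y ! j + z ! j = (\<Sum>v\<in>S. v ! j)"
    using xyz by (simp add: add.assoc)
  also have "\<dots> \<le> (\<Sum>v\<in>G. v ! j)"
    using assms(2-4) S j by (intro sum_mono2) (auto simp: vec_nonneg_def)
  also have "\<dots> \<le> T ! j"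
    using assms(5) j by (simp add: vle_def vsum_nth)
  finally show False
    using j by simp
qed

lemma perfect_matching_card_vertices:
  assumes "perfect_matching Vs E M" and "finite Vs" and "\<forall>e\<in>E. card e = 2"
  shows "card Vs = 2 * card M"
proof -
  have M: "M \<subseteq> E" "\<Union>M = Vs" "pairwise disjnt M"
    using assms(1) by (auto simp: perfect_matching_def pairwise_def disjnt_def)
  then have "card Vs = (\<Sum>e\<in>M. card e)"
    using assms(2) by (metis card_Union_disjoint finite_UnionD rev_finite_subset Union_upper)
  also have "\<dots> = (\<Sum>e\<in>M. 2)"
    using M(1) assms(3) by (intro sum.cong) auto
  finally show ?thesis
    by simp
qed

lemma perfect_matching_card_edges_meeting:
  assumes "perfect_matching Vs E M" and "finite Vs" and "B \<subseteq> Vs"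
    and "\<forall>e\<in>E. card (e \<inter> B) \<le> 1"
  shows "card {e\<in>M. e \<inter> B \<noteq> {}} = card B"
proof -
  let ?MB = "{e\<in>M. e \<inter> B \<noteq> {}}"
  have M: "M \<subseteq> E" "\<Union>M = Vs" "\<forall>e\<in>M. \<forall>e'\<in>M. e \<noteq> e' \<longrightarrow> e \<inter> e' = {}"
    using assms(1) by (auto simp: perfect_matching_def)
  have fin: "finite M" "\<forall>e\<in>M. finite e"
    using M(2) assms(2) by (auto intro: finite_UnionD rev_finite_subset)
  have "card B = card (\<Union>e\<in>?MB. e \<inter> B)"
    using M(2) assms(3) by (intro arg_cong[of _ _ card]) blast
  also have "\<dots> = (\<Sum>e\<in>?MB. card (e \<inter> B))"
    using fin M(3) by (intro card_UN_disjoint) auto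
  also have "\<dots> = (\<Sum>e\<in>?MB. 1)"
  proof (intro sum.cong refl)
    fix e assume e: "e \<in> ?MB"
    then have "card (e \<inter> B) \<noteq> 0"
      using fin(2) by simp
    then show "card (e \<inter> B) = 1"
      using e M(1) assms(4) by fastforce
  qed
  finally show ?thesis
    by simp
qed

lemma perfect_matching_imageI:
  assumes "\<And>x. x \<in> Vs \<Longrightarrow> x \<in> cls x \<and> cls x \<subseteq> Vs \<and> cls x \<in> E"
    and "\<And>x y. x \<in> Vs \<Longrightarrow> y \<in> cls x \<Longrightarrow> cls y = cls x"
  shows "perfect_matching Vs E (cls ` Vs)"
  unfolding perfect_matching_def
proof (intro conjI ballI impI)
  fix e e' assume "e \<in> cls ` Vs" "e' \<in> cls ` Vs" "e \<noteq> e'"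
  then obtain x x' where "x \<in> Vs" "x' \<in> Vs" "e = cls x" "e' = cls x'" "cls x \<noteq> cls x'"
    by blast
  then show "e \<inter> e' = {}"
    using assms(2) by blast
next
  show "cls ` Vs \<subseteq> E" "\<Union> (cls ` Vs) = Vs"
    using assms(1) by blast+
qed

lemma inj_on_extends_to_bij_betw:
  assumes "inj_on g S" and "g ` S \<subseteq> B" and "S \<subseteq> A"
    and "finite A" and "finite B" and "card A = card B"
  obtains \<phi> where "bij_betw \<phi> A B" and "\<forall>x\<in>S. \<phi> x = g x"
proof -
  have "card (A - S) = card (B - g ` S)"
    using assms by (simp add: card_Diff_subset card_image finite_subset)
  then obtain h where h: "bij_betw h (A - S) (B - g ` S)"
    using assms(4,5) finite_same_card_bij by blast
  define \<phi> where "\<phi> x = (if x \<in> S then g x else h x)" for x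
  have "bij_betw \<phi> S (g ` S)"
    using assms(1) by (simp add: bij_betw_cong[of S \<phi> g] \<phi>_def inj_on_imp_bij_betw)
  moreover have "bij_betw \<phi> (A - S) (B - g ` S)"
    using h by (subst bij_betw_cong[of _ _ h]) (auto simp: \<phi>_def)
  ultimately have "bij_betw \<phi> (S \<union> (A - S)) (g ` S \<union> (B - g ` S))"
    by (rule bij_betw_combine) blast
  moreover have "S \<union> (A - S) = A" "g ` S \<union> (B - g ` S) = B"
    using assms(2,3) by auto
  ultimately show ?thesis
    using that[of \<phi>] by (simp add: \<phi>_def)
qed

lemma card_members_of_doubleton_fibres:
  assumes "finite V" and "\<forall>v\<in>V. card {u\<in>V. f u = f v} \<in> {1, 2}"
  shows "card {v\<in>V. card {u\<in>V. f u = f v} = 2} = 2 * (card V - card (f ` V))"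
proof -
  define fibre where "fibre k = {u\<in>V. f u = k}" for k
  define P where "P = {k\<in>f ` V. card (fibre k) = 2}"
  have fin: "finite (fibre k)" for k
    using assms(1) by (simp add: fibre_def)
  have card_UN: "card (\<Union>k\<in>K. fibre k) = (\<Sum>k\<in>K. card (fibre k))" if "finite K" for K
    using that fin by (intro card_UN_disjoint) (auto simp: fibre_def)
  have "V = (\<Union>k\<in>f ` V. fibre k)"
    by (auto simp: fibre_def)
  then have "card V = (\<Sum>k\<in>f ` V. card (fibre k))"
    using assms(1) card_UN by (metis finite_imageI)
  also have "\<dots> = (\<Sum>k\<in>f ` V. 1 + of_bool (k \<in> P))"
    using assms(2) by (intro sum.cong) (auto simp: P_def fibre_def)
  also have "\<dots> = card (f ` V) + card (f ` V \<inter> {k. k \<in> P})"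
    using assms(1) by (simp only: sum.distrib sum_of_bool_eq finite_imageI) simp
  also have "f ` V \<inter> {k. k \<in> P} = P"
    by (auto simp: P_def)
  finally have "card P = card V - card (f ` V)"
    by simp
  moreover have "{v\<in>V. card {u\<in>V. f u = f v} = 2} = (\<Union>k\<in>P. fibre k)"
    by (auto simp: P_def fibre_def)
  moreover have "card (\<Union>k\<in>P. fibre k) = 2 * card P"
    using assms(1) by (simp add: card_UN P_def)
  ultimately show ?thesis
    by simp
qed

definition orig_part :: "vert set \<Rightarrow> rat list set" where
  "orig_part e = {v. Orig v \<in> e}"

definition group_edge :: "rat list set \<Rightarrow> vert set" where
  "group_edge G = Orig ` G \<union> (if card G = 1 then Copy ` G else {})"

lemma orig_part_simps [simp]:
  "orig_part {} = {}"
  "orig_part (insert (Orig v) e) = insert v (orig_part e)"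
  "orig_part (insert (Copy v) e) = orig_part e"
  "orig_part (insert (Bv i) e) = orig_part e"
  by (auto simp: orig_part_def)

lemma orig_part_group_edge [simp]: "orig_part (group_edge G) = G"
  by (auto simp: orig_part_def group_edge_def)

lemma group_edge_in_E_col:
  assumes "G \<subseteq> V" and "card G \<in> {1, 2}" and "vle d (vsum d G) (cap T s c)"
  shows "group_edge G \<in> E_col d V T s c"
proof (cases "card G = 1")
  case True
  then obtain v where "G = {v}"
    by (rule card_1_singletonE)
  then show ?thesis
    using assms(1,3) unfolding E_col_def group_edge_def by auto
next
  case False
  then obtain u v where "G = {u, v}" "u \<noteq> v"
    using assms(2) by (auto simp: card_2_iff)
  then show ?thesis
    using assms(1,3) False unfolding E_col_def group_edge_def
    by (auto simp: vle_vsum_doubleton_iff)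
qed

lemma E_col_orig_part:
  assumes "e \<in> E_col d V T s c"
  shows "orig_part e \<noteq> {}" and "orig_part e \<subseteq> V"
    and "vle d (vsum d (orig_part e)) (cap T s c)"
  using assms unfolding E_col_def by (auto simp: vle_vsum_doubleton_iff)

lemma E_col_disjoint_Bset: "e \<in> E_col d V T s c \<Longrightarrow> e \<inter> Bset C2 = {}"
  by (auto simp: E_col_def Bset_def)

lemma card_edgesG: "e \<in> edgesG d V T s m p C2 \<Longrightarrow> card e = 2"
  by (auto simp: edgesG_def E_bot_def E_col_def Bset_def)

lemma edgesG_Orig_disjoint_Bset:
  "e \<in> edgesG d V T s m p C2 \<Longrightarrow> Orig v \<in> e \<Longrightarrow> e \<inter> Bset C2 = {}"
  by (auto simp: edgesG_def E_bot_def E_col_def Bset_def)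

lemma card_edgesG_inter_Bset: "e \<in> edgesG d V T s m p C2 \<Longrightarrow> card (e \<inter> Bset C2) \<le> 1"
  by (auto simp: edgesG_def E_bot_def E_col_disjoint_Bset) (auto simp: Bset_def Int_insert_left)

lemma finite_vertsG: "finite V \<Longrightarrow> finite (vertsG V C2)"
  by (simp add: vertsG_def Bset_def)

lemma card_vertsG:
  assumes "finite V"
  shows "card (vertsG V C2) = 2 * card V + 2 * C2"
proof -
  have "card (Orig ` V \<union> Copy ` V) = card (Orig ` V) + card (Copy ` V)"
    by (rule card_Un_disjoint) (use assms in auto)
  moreover have "card (Orig ` V \<union> Copy ` V \<union> Bv ` {..<2 * C2})
      = card (Orig ` V \<union> Copy ` V) + card (Bv ` {..<2 * C2})"
    by (rule card_Un_disjoint) (use assms in auto)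
  ultimately show ?thesis
    unfolding vertsG_def Bset_def by (simp add: card_image inj_on_def)
qed

definition container_colour :: "nat \<Rightarrow> nat \<Rightarrow> color" where
  "container_colour p k = (if k \<le> p then Col k else Top)"

lemma cap_container_colour [simp]: "cap T s (container_colour p k) = container_cap T s p k"
  by (simp add: container_colour_def cap_def container_cap_def)

lemma container_colour_in_colorsC: "k \<in> {1..m} \<Longrightarrow> container_colour p k \<in> colorsC m p"
  by (auto simp: container_colour_def colorsC_def)

lemma colorsC_eq_container_colours:
  assumes "p \<le> m"
  shows "colorsC m p = container_colour p ` {1..m}"
proof
  show "colorsC m p \<subseteq> container_colour p ` {1..m}"
  proof
    fix c assume "c \<in> colorsC m p"
    then consider (Col) i where "i \<in> {1..p}" "c = Col i" | (Top) "p < m" "c = Top"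
      by (auto simp: colorsC_def split: if_splits)
    then show "c \<in> container_colour p ` {1..m}"
    proof cases
      case (Col i)
      then have "container_colour p i = c" "i \<in> {1..m}"
        using assms by (auto simp: container_colour_def)
      then show ?thesis
        by (metis image_eqI)
    next
      case Top
      then have "container_colour p m = c" "m \<in> {1..m}"
        by (auto simp: container_colour_def)
      then show ?thesis
        by (metis image_eqI)
    qed
  qed
  show "container_colour p ` {1..m} \<subseteq> colorsC m p"
    using container_colour_in_colorsC by blast
qed

lemma feasible_assignmentI:
  assumes "\<forall>k\<in>{1..m}. P k \<noteq> {}" and "(\<Union>k\<in>{1..m}. P k) = V"
    and "\<forall>k\<in>{1..m}. \<forall>k'\<in>{1..m}. P k \<inter> P k' \<noteq> {} \<longrightarrow> k = k'"
    and "\<forall>k\<in>{1..m}. vle d (vsum d (P k)) (container_cap T s p k)"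
  shows "feasible_assignment d V T s m p"
proof -
  define f where "f v = (THE k. k \<in> {1..m} \<and> v \<in> P k)" for v
  have f: "f v = k" if "k \<in> {1..m}" "v \<in> P k" for k v
    unfolding f_def using assms(3) that by (intro the_equality) blast+
  have P_sub: "P k \<subseteq> V" if "k \<in> {1..m}" for k
    using assms(2) that by auto
  then have blocks: "{v\<in>V. f v = k} = P k" if "k \<in> {1..m}" for k
    using f that assms(2) by auto
  have "f ` V = {1..m}"
  proof
    show "f ` V \<subseteq> {1..m}"
      unfolding assms(2)[symmetric] using f by auto
    show "{1..m} \<subseteq> f ` V"
    proof
      fix k assume k: "k \<in> {1..m}"
      then obtain v where "v \<in> P k"
        using assms(1) by blast
      then show "k \<in> f ` V"
        using f[OF k] P_sub[OF k] by (metis image_eqI subsetD)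
    qed
  qed
  then show ?thesis
    unfolding feasible_assignment_def using blocks assms(4)
    by (intro exI[of _ f] conjI ballI) auto
qed

locale reduction =
  fixes d m p :: nat and T :: "rat list" and V :: "rat list set" and s :: "nat \<Rightarrow> rat list"
  assumes finite_V: "finite V"
    and nonneg_V: "\<forall>v\<in>V. vec_nonneg d v"
    and incompatible_V: "three_incompatible d V T"
    and m_le_card_V: "m \<le> card V"
    and p_le_m: "p \<le> m"
    and s_le_T: "\<forall>i\<in>{1..p}. vle d (s i) T"
begin

abbreviation "C2 \<equiv> card V - m"
abbreviation "verts \<equiv> vertsG V C2"
abbreviation "edges \<equiv> edgesG d V T s m p C2"
abbreviation "colours \<equiv> colorsC' m p C2"
abbreviation "lam \<equiv> lamG d V T s m p C2"

lemma cap_le_T: "c \<in> colorsC m p \<Longrightarrow> vle d (cap T s c) T"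
  using s_le_T by (auto simp: colorsC_def cap_def split: if_splits)

lemma cap_le_container_cap:
  assumes "c \<in> colorsC m p" and "k \<le> p \<Longrightarrow> c = Col k"
  shows "vle d (cap T s c) (container_cap T s p k)"
  using assms cap_le_T by (cases "k \<le> p") (simp_all add: cap_def container_cap_def)

lemma container_cap_le_T: "k \<in> {1..m} \<Longrightarrow> vle d (container_cap T s p k) T"
  using s_le_T by (simp add: container_cap_def)

lemma lamG_E_colI: "c \<in> colorsC m p \<Longrightarrow> e \<in> E_col d V T s c \<Longrightarrow> c \<in> lam e"
  by (auto simp: lamG_def colorsC'_def colorsC_def Ec_def split: if_splits)

lemma lamG_E_botI: "0 < C2 \<Longrightarrow> e \<in> E_bot V C2 \<Longrightarrow> Bot \<in> lam e"
  by (simp add: lamG_def colorsC'_def Ec_def)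

lemma lamG_imp_edgesG: "c \<in> lam e \<Longrightarrow> e \<in> edges"
  by (auto simp: lamG_def colorsC'_def Ec_def edgesG_def split: if_splits)

lemma card_perfect_matching:
  assumes "perfect_matching verts edges M"
  shows "card M = card V + C2"
proof -
  have "2 * card V + 2 * C2 = 2 * card M"
    using perfect_matching_card_vertices[OF assms] finite_V
    by (simp add: finite_vertsG card_vertsG card_edgesG)
  then show ?thesis
    by simp
qed

end

locale feasible_packing = reduction +
  fixes f :: "rat list \<Rightarrow> nat"
  assumes f_onto: "f ` V = {1..m}"
    and f_fits: "\<forall>k\<in>{1..m}. vle d (vsum d {v\<in>V. f v = k}) (container_cap T s p k)"
begin

definition block :: "nat \<Rightarrow> rat list set" where
  "block k = {v\<in>V. f v = k}"

definition paired :: "rat list set" where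
  "paired = {v\<in>V. card (block (f v)) = 2}"

lemma card_block:
  assumes "v \<in> V"
  shows "card (block (f v)) \<in> {1, 2}"
proof -
  have "f v \<in> {1..m}"
    using assms f_onto by blast
  then have "vle d (vsum d (block (f v))) T"
    using f_fits container_cap_le_T unfolding block_def by (blast intro: vle_trans)
  then have "card (block (f v)) \<le> 2"
    using incompatible_V nonneg_V finite_V
    by (intro three_incompatible_card_le_2) (auto simp: block_def)
  moreover have "card (block (f v)) \<noteq> 0"
    using assms finite_V by (auto simp: block_def)
  ultimately show ?thesis
    by auto
qed

lemma card_paired: "card paired = 2 * C2"
proof -
  have "card paired = 2 * (card V - card (f ` V))"
    unfolding paired_def block_def using finite_V card_block
    by (intro card_members_of_doubleton_fibres) (auto simp: block_def)
  then show ?thesis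
    using f_onto by simp
qed

definition slot :: "rat list \<Rightarrow> nat" where
  "slot = (SOME \<beta>. bij_betw \<beta> paired {..<2 * C2})"

lemma bij_slot: "bij_betw slot paired {..<2 * C2}"
proof -
  have "\<exists>\<beta>. bij_betw \<beta> paired {..<2 * C2}"
    using finite_V card_paired by (intro finite_same_card_bij) (auto simp: paired_def)
  then show ?thesis
    unfolding slot_def by (rule someI_ex)
qed

fun matched_edge :: "vert \<Rightarrow> vert set" where
  "matched_edge (Orig v) = group_edge (block (f v))"
| "matched_edge (Copy v) =
     (if v \<in> paired then {Copy v, Bv (slot v)} else group_edge (block (f v)))"
| "matched_edge (Bv i) = {Copy (inv_into paired slot i), Bv i}"

definition edge_colour :: "vert set \<Rightarrow> color" where
  "edge_colour e =
     (if orig_part e = {} then Bot else container_colour p (the_elem (f ` orig_part e)))"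

lemma group_edge_block:
  assumes "v \<in> V"
  shows "group_edge (block (f v)) \<in> E_col d V T s (container_colour p (f v))"
    and "edge_colour (group_edge (block (f v))) = container_colour p (f v)"
proof -
  have "f v \<in> {1..m}"
    using assms f_onto by blast
  then show "group_edge (block (f v)) \<in> E_col d V T s (container_colour p (f v))"
    using assms card_block[OF assms] finite_V f_fits
    by (intro group_edge_in_E_col) (auto simp: block_def)
  have "f ` block (f v) = {f v}"
    using assms by (auto simp: block_def)
  then show "edge_colour (group_edge (block (f v))) = container_colour p (f v)"
    by (auto simp: edge_colour_def)
qed

lemma matched_edge_cases:
  assumes "x \<in> verts"
  obtains (block) v where "v \<in> V" and "matched_edge x = group_edge (block (f v))"
  | (bot) w i where "w \<in> paired" and "slot w = i" and "i < 2 * C2"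
      and "matched_edge x = {Copy w, Bv i}"
proof -
  consider (Orig) v where "v \<in> V" "x = Orig v" | (Copy) v where "v \<in> V" "x = Copy v"
    | (Bv) i where "i < 2 * C2" "x = Bv i"
    using assms by (auto simp: vertsG_def Bset_def)
  then show ?thesis
  proof cases
    case (Copy v)
    then show ?thesis
      using that(1)[of v] that(2)[of v "slot v"] bij_slot
      by (cases "v \<in> paired") (auto simp: bij_betw_def)
  next
    case (Bv i)
    then have "i \<in> slot ` paired"
      using bij_slot by (simp add: bij_betw_def)
    then show ?thesis
      using that(2)[of "inv_into paired slot i" i] Bv by (simp add: inv_into_into f_inv_into_f)
  qed (use that in simp)
qed

lemma matched_edge_colour:
  assumes "x \<in> verts"
  shows "edge_colour (matched_edge x) \<in> lam (matched_edge x)"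
  using assms
proof (cases rule: matched_edge_cases)
  case (block v)
  have "f v \<in> {1..m}"
    using block(1) f_onto by blast
  then show ?thesis
    unfolding block(2) group_edge_block(2)[OF block(1)]
    by (intro lamG_E_colI group_edge_block(1)[OF block(1)] container_colour_in_colorsC)
next
  case (bot w i)
  have "{Copy w, Bv i} \<in> E_bot V C2"
    using bot(1,3) by (auto simp: E_bot_def Bset_def paired_def)
  moreover have "edge_colour {Copy w, Bv i} = Bot"
    by (simp add: edge_colour_def)
  ultimately show ?thesis
    using bot(3,4) by (simp add: lamG_E_botI)
qed

lemma matched_edge_subset:
  assumes "x \<in> verts"
  shows "matched_edge x \<subseteq> verts"
  using assms
proof (cases rule: matched_edge_cases)
  case (block v)
  then show ?thesis
    by (auto simp: group_edge_def block_def vertsG_def)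
next
  case (bot w i)
  then show ?thesis
    by (auto simp: paired_def vertsG_def Bset_def)
qed

lemma mem_matched_edge:
  assumes "x \<in> verts"
  shows "x \<in> matched_edge x"
proof -
  have "card (block (f v)) = 1" if "v \<in> V" "v \<notin> paired" for v
    using card_block[OF that(1)] that by (auto simp: paired_def)
  then show ?thesis
    using assms by (auto simp: vertsG_def Bset_def group_edge_def block_def)
qed

lemma matched_edge_group_edge:
  assumes "v \<in> V" and "y \<in> group_edge (block (f v))"
  shows "matched_edge y = group_edge (block (f v))"
proof -
  consider (Orig) u where "u \<in> block (f v)" "y = Orig u"
    | (Copy) u where "u \<in> block (f v)" "card (block (f v)) = 1" "y = Copy u"
    using assms(2) by (auto simp: group_edge_def split: if_splits)
  then show ?thesis
  proof cases
    case (Copy u)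
    then show ?thesis
      by (auto simp: block_def paired_def)
  qed (simp add: block_def)
qed

lemma matched_edge_mem_eq:
  assumes "x \<in> verts" and "y \<in> matched_edge x"
  shows "matched_edge y = matched_edge x"
  using assms(1)
proof (cases rule: matched_edge_cases)
  case (block v)
  then show ?thesis
    using assms(2) matched_edge_group_edge by simp
next
  case (bot w i)
  have "inv_into paired slot i = w"
    using bij_slot bot(1,2) by (metis bij_betw_def inv_into_f_f)
  moreover have "y = Copy w \<or> y = Bv i"
    using assms(2) bot(4) by simp
  ultimately show ?thesis
    using bot(1,2,4) by (elim disjE) simp_all
qed

lemma colours_subset_edge_colours: "colours \<subseteq> edge_colour ` matched_edge ` verts"
proof
  fix c assume c: "c \<in> colours"
  show "c \<in> edge_colour ` matched_edge ` verts"
  proof (cases "c = Bot")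
    case True
    then have "0 < C2"
      using c by (auto simp: colorsC'_def colorsC_def split: if_splits)
    then have "paired \<noteq> {}"
      using card_paired by auto
    then obtain w where w: "w \<in> paired"
      by blast
    then have "edge_colour (matched_edge (Copy w)) = c"
      using True by (simp add: edge_colour_def)
    moreover have "Copy w \<in> verts"
      using w by (simp add: paired_def vertsG_def)
    ultimately show ?thesis
      by (metis image_eqI)
  next
    case False
    then have "c \<in> container_colour p ` f ` V"
      using c f_onto colorsC_eq_container_colours[OF p_le_m]
      by (simp add: colorsC'_def split: if_splits)
    then obtain v where v: "v \<in> V" "container_colour p (f v) = c"
      by blast
    then have "edge_colour (matched_edge (Orig v)) = c"
      using group_edge_block(2)[OF v(1)] by simp
    moreover have "Orig v \<in> verts"
      using v(1) by (simp add: vertsG_def)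
    ultimately show ?thesis
      by (metis image_eqI)
  qed
qed

theorem rainbow_matching_exists: "otr_yes verts edges colours lam (\<lambda>e c. 1) (of_nat (card V + C2))"
proof -
  have matching: "perfect_matching verts edges (matched_edge ` verts)"
    using mem_matched_edge matched_edge_subset matched_edge_colour lamG_imp_edgesG
      matched_edge_mem_eq
    by (intro perfect_matching_imageI) blast+
  moreover have "edge_colour ` matched_edge ` verts = colours"
    using colours_subset_edge_colours matched_edge_colour by (auto simp: lamG_def)
  moreover have "(\<Sum>e\<in>matched_edge ` verts. 1 :: rat) = of_nat (card V + C2)"
    using card_perfect_matching[OF matching] by simp
  ultimately show ?thesis
    unfolding otr_yes_def using matched_edge_colour
    by (intro exI[of _ "matched_edge ` verts"] exI[of _ edge_colour]) auto
qed

end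

locale otr_solution = reduction +
  fixes M :: "vert set set" and \<xi> :: "vert set \<Rightarrow> color"
  assumes matching: "perfect_matching verts edges M"
    and \<xi>_lam: "\<forall>e\<in>M. \<xi> e \<in> lam e"
    and \<xi>_onto: "\<xi> ` M = colours"
begin

definition container_edges :: "vert set set" where
  "container_edges = {e\<in>M. e \<inter> Bset C2 = {}}"

lemma finite_M: "finite M"
  using matching finite_vertsG[OF finite_V]
  by (metis perfect_matching_def finite_UnionD)

lemma container_edge_E_col:
  assumes "e \<in> container_edges"
  shows "\<xi> e \<in> colorsC m p" and "e \<in> E_col d V T s (\<xi> e)"
proof -
  have e: "e \<in> M" "e \<inter> Bset C2 = {}"
    using assms by (auto simp: container_edges_def)
  then have "\<xi> e \<in> colours" "e \<in> Ec d V T s C2 (\<xi> e)"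
    using \<xi>_lam by (auto simp: lamG_def)
  moreover have "\<xi> e \<noteq> Bot"
    using e(2) calculation(2) by (auto simp: Ec_def E_bot_def Bset_def)
  ultimately show "\<xi> e \<in> colorsC m p" "e \<in> E_col d V T s (\<xi> e)"
    by (auto simp: colorsC'_def Ec_def split: if_splits)
qed

lemma card_container_edges: "card container_edges = m"
proof -
  let ?bot_edges = "{e\<in>M. e \<inter> Bset C2 \<noteq> {}}"
  have "card ?bot_edges = card (Bset C2)"
    using matching finite_vertsG[OF finite_V] card_edgesG_inter_Bset
    by (intro perfect_matching_card_edges_meeting) (auto simp: vertsG_def)
  also have "\<dots> = 2 * C2"
    by (simp add: Bset_def card_image inj_on_def)
  finally have "card ?bot_edges = 2 * C2" .
  moreover have "card M = card container_edges + card ?bot_edges"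
    unfolding container_edges_def using finite_M
    by (subst card_Un_disjoint[symmetric]) (auto intro: arg_cong[of _ _ card])
  ultimately show ?thesis
    using card_perfect_matching[OF matching] m_le_card_V by simp
qed

lemma container_edge_of_vector:
  assumes "v \<in> V"
  obtains e where "e \<in> container_edges" and "v \<in> orig_part e"
proof -
  have "Orig v \<in> \<Union>M"
    using assms matching by (simp add: perfect_matching_def vertsG_def)
  then obtain e where e: "e \<in> M" "Orig v \<in> e"
    by blast
  moreover have "e \<in> edges"
    using e(1) matching by (auto simp: perfect_matching_def)
  ultimately have "e \<in> container_edges"
    using edgesG_Orig_disjoint_Bset by (simp add: container_edges_def)
  then show ?thesis
    using that e(2) by (simp add: orig_part_def)
qed

lemma container_edges_cover: "(\<Union>e\<in>container_edges. orig_part e) = V"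
proof
  show "(\<Union>e\<in>container_edges. orig_part e) \<subseteq> V"
    using container_edge_E_col(2) E_col_orig_part(2) by blast
  show "V \<subseteq> (\<Union>e\<in>container_edges. orig_part e)"
  proof
    fix v assume "v \<in> V"
    then obtain e where "e \<in> container_edges" "v \<in> orig_part e"
      by (rule container_edge_of_vector)
    then show "v \<in> (\<Union>e\<in>container_edges. orig_part e)"
      by blast
  qed
qed

lemma container_edges_disjoint:
  assumes "e \<in> container_edges" and "e' \<in> container_edges"
    and "orig_part e \<inter> orig_part e' \<noteq> {}"
  shows "e = e'"
proof -
  have "e \<inter> e' \<noteq> {}"
    using assms(3) by (auto simp: orig_part_def)
  then show ?thesis
    using assms(1,2) matching unfolding perfect_matching_def container_edges_def by blast
qed

lemma container_edges_numbering:
  obtains \<phi> where "bij_betw \<phi> {1..m} container_edges" and "\<forall>k\<in>{1..p}. \<xi> (\<phi> k) = Col k"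
proof -
  have "\<exists>e\<in>container_edges. \<xi> e = Col i" if "i \<in> {1..p}" for i
  proof -
    have "Col i \<in> \<xi> ` M"
      using that \<xi>_onto by (simp add: colorsC'_def colorsC_def)
    then obtain e where e: "e \<in> M" "\<xi> e = Col i"
      by (metis imageE)
    then have "e \<in> E_col d V T s (Col i)"
      using \<xi>_lam by (auto simp: lamG_def Ec_def)
    then have "e \<in> container_edges"
      using e(1) E_col_disjoint_Bset by (auto simp: container_edges_def)
    then show ?thesis
      using e(2) by blast
  qed
  then obtain g where g: "\<forall>i\<in>{1..p}. g i \<in> container_edges \<and> \<xi> (g i) = Col i"
    by metis
  have "inj_on g {1..p}"
    using g by (intro inj_onI) (metis color.inject)
  moreover have "g ` {1..p} \<subseteq> container_edges"
    using g by blast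
  moreover have "finite container_edges"
    using finite_M by (simp add: container_edges_def)
  ultimately obtain \<phi> where "bij_betw \<phi> {1..m} container_edges" "\<forall>k\<in>{1..p}. \<phi> k = g k"
    using p_le_m card_container_edges
    by (elim inj_on_extends_to_bij_betw[where A = "{1..m}"]) auto
  then show ?thesis
    using that g by simp
qed

theorem feasible_assignment_exists: "feasible_assignment d V T s m p"
proof -
  obtain \<phi> where \<phi>: "bij_betw \<phi> {1..m} container_edges" "\<forall>k\<in>{1..p}. \<xi> (\<phi> k) = Col k"
    by (rule container_edges_numbering)
  have \<phi>_E_col: "\<phi> k \<in> E_col d V T s (\<xi> (\<phi> k))" "\<xi> (\<phi> k) \<in> colorsC m p"
    if "k \<in> {1..m}" for k
    using container_edge_E_col bij_betwE[OF \<phi>(1)] that by blast+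
  show ?thesis
  proof (rule feasible_assignmentI[where P = "\<lambda>k. orig_part (\<phi> k)"])
    show "\<forall>k\<in>{1..m}. orig_part (\<phi> k) \<noteq> {}"
      using \<phi>_E_col E_col_orig_part(1) by blast
    have "(\<Union>k\<in>{1..m}. orig_part (\<phi> k)) = (\<Union>e\<in>\<phi> ` {1..m}. orig_part e)"
      by simp
    also have "\<phi> ` {1..m} = container_edges"
      by (rule bij_betw_imp_surj_on[OF \<phi>(1)])
    finally show "(\<Union>k\<in>{1..m}. orig_part (\<phi> k)) = V"
      by (simp only: container_edges_cover)
    show "\<forall>k\<in>{1..m}. \<forall>k'\<in>{1..m}. orig_part (\<phi> k) \<inter> orig_part (\<phi> k') \<noteq> {} \<longrightarrow> k = k'"
    proof (intro ballI impI)
      fix k k' assume k: "k \<in> {1..m}" "k' \<in> {1..m}"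
        and overlap: "orig_part (\<phi> k) \<inter> orig_part (\<phi> k') \<noteq> {}"
      have "\<phi> k \<in> container_edges" "\<phi> k' \<in> container_edges"
        using bij_betwE[OF \<phi>(1)] k by blast+
      then have "\<phi> k = \<phi> k'"
        using overlap by (rule container_edges_disjoint)
      then show "k = k'"
        using inj_onD[OF bij_betw_imp_inj_on[OF \<phi>(1)]] k by blast
    qed
    show "\<forall>k\<in>{1..m}. vle d (vsum d (orig_part (\<phi> k))) (container_cap T s p k)"
    proof
      fix k assume k: "k \<in> {1..m}"
      have "vle d (cap T s (\<xi> (\<phi> k))) (container_cap T s p k)"
        using \<phi>(2) k by (intro cap_le_container_cap \<phi>_E_col(2)) auto
      then show "vle d (vsum d (orig_part (\<phi> k))) (container_cap T s p k)"
        using E_col_orig_part(3)[OF \<phi>_E_col(1)[OF k]] by (rule vle_trans[rotated])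
    qed
  qed
qed

end

context reduction
begin

lemma feasible_imp_otr_yes:
  assumes "feasible_assignment d V T s m p"
  shows "otr_yes verts edges colours lam (\<lambda>e c. 1) (of_nat (card V + C2))"
proof -
  obtain f where "f ` V = {1..m}"
    and "\<forall>k\<in>{1..m}. vle d (vsum d {v\<in>V. f v = k}) (container_cap T s p k)"
    using assms unfolding feasible_assignment_def by blast
  then interpret feasible_packing d m p T V s f
    by unfold_locales
  show ?thesis
    by (rule rainbow_matching_exists)
qed

lemma otr_yes_imp_feasible:
  assumes "otr_yes verts edges colours lam (\<lambda>e c. 1) (of_nat (card V + C2))"
  shows "feasible_assignment d V T s m p"
proof -
  obtain M \<xi> where "perfect_matching verts edges M" "\<forall>e\<in>M. \<xi> e \<in> lam e" "\<xi> ` M = colours"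
    using assms unfolding otr_yes_def by blast
  then interpret otr_solution d m p T V s M \<xi>
    by unfold_locales
  show ?thesis
    by (rule feasible_assignment_exists)
qed

end

theorem lemma6:
  fixes d m p :: nat and T :: "rat list" and V :: "rat list set" and s :: "nat \<Rightarrow> rat list"
  assumes "d \<ge> 1"
    and "vec_nonneg d T"
    and "finite V"
    and "\<forall>v\<in>V. vec_nonneg d v"
    and "three_incompatible d V T"
    and "card V \<le> 2 * m" and "m \<le> card V"
    and "p \<le> m"
    and "\<forall>i\<in>{1..p}. vec_nonneg d (s i) \<and> vle d (s i) T"
  shows "feasible_assignment d V T s m p \<longleftrightarrow>
         otr_yes (vertsG V (card V - m)) (edgesG d V T s m p (card V - m))
                 (colorsC' m p (card V - m)) (lamG d V T s m p (card V - m))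
                 (\<lambda>e c. 1) (of_nat (card V + (card V - m)))"
proof -
  interpret reduction d m p T V s
    using assms(3-9) by unfold_locales auto
  show ?thesis
    using feasible_imp_otr_yes otr_yes_imp_feasible by blast
qed

end
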